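(* In a finite ELP, let $\pi$ be a policy, let $Q_{\max}$ be an optimal solution of the problem: maximize $\mathbb E_\pi[Q(S_T,A_T)]$ over $Q\in\mathcal Q$ subject to $Q\le\mathcal BQ$ pointwise, and let $\mu$ be a $Q_{\max}$-greedy policy. Let $(s,a)\in\mathcal S\times\mathcal A$ and define $N(s,a)=\{(s',a'):s'\notin\mathcal S_\bot,\ P(s'|s,a)\mu(a'|s')>0\}$. If $Q_{\max}(s,a)=Q^*(s,a)$, then for every $(s',a')\in N(s,a)$: $Q_{\max}(s',a')=Q^*(s',a')$ and $\max_{\bar a}Q_{\max}(s',\bar a)=\max_{\bar a}Q^*(s',\bar a)$.
   Context: A finite ELP is $(\mathcal S,\mathcal A,P,R,\rho)$ with finite $\mathcal S,\mathcal A$, reward $R:\mathcal S\to\mathbb R$, transitions $P(s'|s,a)$, distribution $\rho$, and nonempty terminal set $\mathcal S_\bot$. Under a policy $\pi$, $S_0$ is a fixed terminal state, $A_t\sim\pi(\cdot|S_t)$, $S_{t+1}\sim P(\cdot|S_t,A_t)$, and $T=\inf\{t\ge1:S_t\in\mathcal S_\bot\}$. ELP conditions: $\mathbb E_\pi[T]<\infty$ for every $\pi$; $P(s'|s,a)=\rho(s')$ for all $s\in\mathcal S_\bot$, all $a,s'$; every state is reachable under some policy. $\mathcal Q$ = all functions $\mathcal S\times\mathcal A\to\mathbb R$. $\mathcal BQ(s,a)=\sum_{s'}P(s'|s,a)\big(R(s')+\mathbf 1[s'\notin\mathcal S_\bot]\max_{a'}Q(s',a')\big)$, with unique fixed point $Q^*$.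 A $Q$-greedy policy is one with $\mu(a|s)>0$ only if $Q(s,a)=\max_{\bar a}Q(s,\bar a)$. *)

theory Defs
  imports Complex_Main
begin

text \<open>Finite ELP. States 's and actions 'a are finite types.
  P s a s' is the transition probability P(s'|s,a); pol s a is pi(a|s).\<close>

definition is_policy :: "('s::finite \<Rightarrow> 'a::finite \<Rightarrow> real) \<Rightarrow> bool" where
  "is_policy pol \<longleftrightarrow> (\<forall>s a. 0 \<le> pol s a) \<and> (\<forall>s. (\<Sum>a\<in>UNIV. pol s a) = 1)"

text \<open>Distribution of S_t under the policy, started at the terminal state s0.\<close>
fun state_dist :: "('s::finite \<Rightarrow> 'a::finite \<Rightarrow> 's \<Rightarrow> real) \<Rightarrow> 's \<Rightarrow>
    ('s \<Rightarrow> 'a \<Rightarrow> real) \<Rightarrow> nat \<Rightarrow> 's \<Rightarrow> real" where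
  "state_dist P s0 pol 0 s = (if s = s0 then 1 else 0)"
| "state_dist P s0 pol (Suc t) s' =
     (\<Sum>s\<in>UNIV. state_dist P s0 pol t s * (\<Sum>a\<in>UNIV. pol s a * P s a s'))"

text \<open>alive P Sbot s0 pol t s = Pr(S_t = s and t < T) (T = first hitting time t \<ge> 1 of Sbot).\<close>
fun alive :: "('s::finite \<Rightarrow> 'a::finite \<Rightarrow> 's \<Rightarrow> real) \<Rightarrow> 's set \<Rightarrow> 's \<Rightarrow>
    ('s \<Rightarrow> 'a \<Rightarrow> real) \<Rightarrow> nat \<Rightarrow> 's \<Rightarrow> real" where
  "alive P Sbot s0 pol 0 s = (if s = s0 then 1 else 0)"
| "alive P Sbot s0 pol (Suc t) s' =
     (if s' \<in> Sbot then 0 else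
       (\<Sum>s\<in>UNIV. alive P Sbot s0 pol t s * (\<Sum>a\<in>UNIV. pol s a * P s a s')))"

text \<open>E_pi[T] = sum over t \<ge> 0 of Pr(T > t); finiteness means this series converges.\<close>
definition finite_expected_T where
  "finite_expected_T P Sbot s0 pol \<longleftrightarrow> summable (\<lambda>t. \<Sum>s\<in>UNIV. alive P Sbot s0 pol t s)"

text \<open>Pr(S_T = s) for a terminal state s.\<close>
definition hit_dist where
  "hit_dist P Sbot s0 pol s =
     (\<Sum>t. \<Sum>s''\<in>UNIV. alive P Sbot s0 pol t s'' * (\<Sum>a\<in>UNIV. pol s'' a * P s'' a s))"

text \<open>E_pi[Q(S_T, A_T)], with A_T \<sim> pi(.|S_T).\<close>
definition exp_terminal_Q where
  "exp_terminal_Q P Sbot s0 pol Q =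
     (\<Sum>s\<in>Sbot. hit_dist P Sbot s0 pol s * (\<Sum>a\<in>UNIV. pol s a * Q s a))"

definition finite_ELP ::
  "('s::finite \<Rightarrow> 'a::finite \<Rightarrow> 's \<Rightarrow> real) \<Rightarrow> ('s \<Rightarrow> real) \<Rightarrow> 's set \<Rightarrow> 's \<Rightarrow> bool" where
  "finite_ELP P \<rho> Sbot s0 \<longleftrightarrow>
     Sbot \<noteq> {} \<and> s0 \<in> Sbot \<and>
     (\<forall>s a s'. 0 \<le> P s a s') \<and> (\<forall>s a. (\<Sum>s'\<in>UNIV. P s a s') = 1) \<and>
     (\<forall>s'. 0 \<le> \<rho> s') \<and> (\<Sum>s'\<in>UNIV. \<rho> s') = 1 \<and>
     (\<forall>pol. is_policy pol \<longrightarrow> finite_expected_T P Sbot s0 pol) \<and>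
     (\<forall>s\<in>Sbot. \<forall>a s'. P s a s' = \<rho> s') \<and>
     (\<forall>s. \<exists>pol. is_policy pol \<and> (\<exists>t. state_dist P s0 pol t s > 0))"

definition bellman ::
  "('s::finite \<Rightarrow> 'a::finite \<Rightarrow> 's \<Rightarrow> real) \<Rightarrow> ('s \<Rightarrow> real) \<Rightarrow> 's set \<Rightarrow>
     ('s \<Rightarrow> 'a \<Rightarrow> real) \<Rightarrow> 's \<Rightarrow> 'a \<Rightarrow> real" where
  "bellman P R Sbot Q s a =
     (\<Sum>s'\<in>UNIV. P s a s' * (R s' + (if s' \<notin> Sbot then Max (range (Q s')) else 0)))"

definition Qstar where
  "Qstar P R Sbot = (THE Q. bellman P R Sbot Q = Q)"

definition greedy :: "('s \<Rightarrow> 'a::finite \<Rightarrow> real) \<Rightarrow> ('s \<Rightarrow> 'a \<Rightarrow> real) \<Rightarrow> bool" where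
  "greedy Q mu \<longleftrightarrow> (\<forall>s a. mu s a > 0 \<longrightarrow> Q s a = Max (range (Q s)))"

end

theory Submission
  imports Defs "HOL-Analysis.Urysohn"
begin

text \<open>
  Call a nonempty set of state-action pairs a trap if every successor reached with positive
  probability from one of its pairs is nonterminal and has again an action in the set. A finite
  ELP has no traps: a policy can reach a trap and then stay in it, so its survival probability
  would not tend to zero. Without traps, every \<open>h\<close> with \<open>h \<le> B0 h\<close> for the reward-free Bellman
  operator \<open>B0\<close> is nonpositive, as the pairs where \<open>h\<close> attains a positive maximum would form a
  trap. For \<open>h = Q - V\<close> this is the comparison principle: \<open>Q \<le> \<B> Q\<close> and \<open>\<B> V \<le> V\<close> imply
  \<open>Q \<le> V\<close>. The same argument shows that some power of \<open>\<B>\<close> is a sup-norm contraction, so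
  \<open>Q\<^sup>*\<close> exists by Banach's theorem, and it is unique by comparison.

  Hence \<open>Q\<^sub>m\<^sub>a\<^sub>x \<le> Q\<^sup>*\<close>, and if they agree at \<open>(s, a)\<close>, then
  \<open>0 = Q\<^sup>*(s, a) - Q\<^sub>m\<^sub>a\<^sub>x(s, a) \<ge> \<B>Q\<^sup>*(s, a) - \<B>Q\<^sub>m\<^sub>a\<^sub>x(s, a)\<close>, which is the
  \<open>P(\<cdot>|s, a)\<close>-average over nonterminal \<open>s'\<close> of the nonnegative gaps
  \<open>max Q\<^sup>*(s', \<cdot>) - max Q\<^sub>m\<^sub>a\<^sub>x(s', \<cdot>)\<close>. So these gaps vanish at every successor, and a greedy
  action \<open>a'\<close> is squeezed: \<open>Q\<^sup>*(s', a') \<le> max Q\<^sup>*(s', \<cdot>) = Q\<^sub>m\<^sub>a\<^sub>x(s', a') \<le> Q\<^sup>*(s', a')\<close>.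
\<close>

section \<open>Maxima and sup-norm contractions on finite types\<close>

lemma Max_range_ge: "f x \<le> Max (range (f :: 'b::finite \<Rightarrow> 'c::linorder))"
  by simp

lemma Max_range_attained:
  obtains x where "Max (range (f :: 'b::finite \<Rightarrow> 'c::linorder)) = f x"
proof -
  have "Max (range f) \<in> range f" by (rule Max_in) auto
  then show thesis using that by blast
qed

lemma Max_range_mono:
  "(\<And>x. f x \<le> g x) \<Longrightarrow> Max (range (f :: 'b::finite \<Rightarrow> 'c::linorder)) \<le> Max (range g)"
  by (metis Max_range_attained Max_range_ge order_trans)

lemma Max_range_diff_le:
  "Max (range (f :: 'b::finite \<Rightarrow> 'c::linordered_ab_group_add)) - Max (range g)
     \<le> Max (range (\<lambda>x. f x - g x))"
proof -
  obtain x where "Max (range f) = f x" by (rule Max_range_attained)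
  moreover have "f x - Max (range g) \<le> f x - g x" by (simp add: Max_range_ge)
  moreover have "f x - g x \<le> Max (range (\<lambda>x. f x - g x))" by (rule Max_range_ge)
  ultimately show ?thesis by (metis order_trans)
qed

lemma Max_range_cmult:
  "0 \<le> c \<Longrightarrow> Max (range (\<lambda>x. c * (f :: 'b::finite \<Rightarrow> 'c::linordered_semiring) x)) = c * Max (range f)"
  using mono_Max_commute[of "(*) c" "range f"] by (simp add: mono_def mult_left_mono image_image)

lemma sum_pos_imp_ex_pos: "0 < sum f A \<Longrightarrow> \<exists>x\<in>A. 0 < (f x :: 'b::linordered_ab_group_add)"
  by (metis not_le sum_nonpos)

lemma sum_delta_mult:
  fixes f :: "'a::finite \<Rightarrow> 'b::semiring_1"
  shows "(\<Sum>x\<in>UNIV. (if x = y then 1 else 0) * f x) = f y"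
proof -
  have "(\<Sum>x\<in>UNIV. (if x = y then 1 else 0) * f x) = (\<Sum>x\<in>UNIV. if x = y then f x else 0)"
    by (rule sum.cong) auto
  then show ?thesis by simp
qed

lemma fspace_finite_UNIV: "Met_TC.fspace UNIV = (UNIV :: ('i::finite \<Rightarrow> 'm::metric_space) set)"
  by (auto simp: Met_TC.fspace_def finite_imp_bounded)

lemma sup_contraction_has_fixpoint:
  fixes F :: "('i::finite \<Rightarrow> 'm::complete_space) \<Rightarrow> 'i \<Rightarrow> 'm"
  assumes "k < 1"
    and contraction: "\<And>f g c i. (\<And>j. dist (f j) (g j) \<le> c) \<Longrightarrow> dist (F f i) (F g i) \<le> k * c"
  obtains f where "F f = f"
proof -
  let ?d = "Met_TC.fdist UNIV :: ('i \<Rightarrow> 'm) \<Rightarrow> _"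
  have "mcomplete_of (funspace (UNIV :: 'i set) (Met_TC.Self :: 'm metric))"
    by (rule Met_TC.mcomplete_funspace) (simp add: complete_UNIV)
  then have "Metric_space.mcomplete (Met_TC.fspace UNIV) ?d"
    by (simp add: mcomplete_of_def)
  moreover have "?d (F f) (F g) \<le> k * ?d f g" for f g
  proof -
    have "dist (f j) (g j) \<le> ?d f g" for j
      using Met_TC.funspace_mdist_le[of f UNIV g "?d f g"] by (simp add: fspace_finite_UNIV)
    then have "dist (F f i) (F g i) \<le> k * ?d f g" for i
      by (rule contraction)
    then show ?thesis
      using Met_TC.funspace_mdist_le[of "F f" UNIV "F g"] by (simp add: fspace_finite_UNIV)
  qed
  ultimately show thesis
    using Metric_space.Banach_fixedpoint_thm[OF Met_TC.Metric_space_funspace, of UNIV F k] assms(1) that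
    by (auto simp: fspace_finite_UNIV)
qed

lemma contracting_power_has_fixpoint:
  fixes F :: "('i::finite \<Rightarrow> 'm::complete_space) \<Rightarrow> 'i \<Rightarrow> 'm"
  assumes "k < 1"
    and contraction: "\<And>f g c i. (\<And>j. dist (f j) (g j) \<le> c) \<Longrightarrow> dist ((F ^^ N) f i) ((F ^^ N) g i) \<le> k * c"
  obtains f where "F f = f"
proof -
  obtain f where fixed: "(F ^^ N) f = f"
    using sup_contraction_has_fixpoint[where F = "F ^^ N", OF \<open>k < 1\<close> contraction] by blast
  have "(F ^^ N) (F f) = F ((F ^^ N) f)"
    by (rule funpow_swap1[symmetric])
  then have fixed': "(F ^^ N) (F f) = F f"
    by (simp only: fixed)
  define c where "c = Max (range (\<lambda>j. dist (F f j) (f j)))"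
  have dist_le_c: "dist (F f j) (f j) \<le> c" for j
    unfolding c_def by (rule Max_range_ge)
  have "dist ((F ^^ N) (F f) j) ((F ^^ N) f j) \<le> k * c" for j
    by (rule contraction) (rule dist_le_c)
  then have dist_le: "dist (F f j) (f j) \<le> k * c" for j
    by (simp only: fixed fixed')
  obtain j0 where "c = dist (F f j0) (f j0)"
    unfolding c_def by (rule Max_range_attained)
  then have "0 \<le> c" and "(1 - k) * c \<le> 0"
    using dist_le[of j0] by (simp_all add: algebra_simps)
  then have "c \<le> 0"
    using \<open>k < 1\<close> by (simp add: mult_le_0_iff)
  then have "F f = f"
    using dist_le_c by (intro ext) (meson dist_le_zero_iff order_trans)
  then show thesis by (rule that)
qed

section \<open>Traps\<close>

definition trap :: "('s \<Rightarrow> 'a \<Rightarrow> 's \<Rightarrow> real) \<Rightarrow> 's set \<Rightarrow> ('s \<times> 'a) set \<Rightarrow> bool" where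
  "trap P Sbot E \<longleftrightarrow> E \<noteq> {} \<and>
     (\<forall>(s, a) \<in> E. \<forall>s'. 0 < P s a s' \<longrightarrow> s' \<notin> Sbot \<and> (\<exists>a'. (s', a') \<in> E))"

lemma alive_nonneg:
  assumes "\<And>s a s'. 0 \<le> P s a s'" and "\<And>s a. 0 \<le> pol s a"
  shows "0 \<le> alive P Sbot s0 pol t s"
  using assms by (induction t arbitrary: s) (auto intro!: sum_nonneg mult_nonneg_nonneg)

lemma state_dist_nonneg:
  assumes "\<And>s a s'. 0 \<le> P s a s'" and "\<And>s a. 0 \<le> pol s a"
  shows "0 \<le> state_dist P s0 pol t s"
  using assms by (induction t arbitrary: s) (auto intro!: sum_nonneg mult_nonneg_nonneg)

lemma state_dist_Suc_pos:
  assumes Pnn: "\<And>s a s'. 0 \<le> P s a s'" and pol: "\<And>s a. 0 \<le> pol s a"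
    and pos: "0 < state_dist P s0 pol (Suc t) s'"
  obtains s a where "0 < state_dist P s0 pol t s" "0 < pol s a" "0 < P s a s'"
proof -
  obtain s where "0 < state_dist P s0 pol t s * (\<Sum>a\<in>UNIV. pol s a * P s a s')"
    using sum_pos_imp_ex_pos[OF pos[unfolded state_dist.simps]] by blast
  moreover have "0 \<le> state_dist P s0 pol t s" "0 \<le> (\<Sum>a\<in>UNIV. pol s a * P s a s')"
    by (simp_all add: state_dist_nonneg Pnn pol sum_nonneg)
  ultimately have sd: "0 < state_dist P s0 pol t s" and "0 < (\<Sum>a\<in>UNIV. pol s a * P s a s')"
    by (simp_all add: zero_less_mult_iff)
  then obtain a where "0 < pol s a * P s a s'"
    using sum_pos_imp_ex_pos by blast
  then have "0 < pol s a" "0 < P s a s'"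
    using Pnn[of s a s'] pol[of s a] by (auto simp: zero_less_mult_iff)
  with sd show thesis by (rule that)
qed

lemma alive_Suc_pos:
  assumes Pnn: "\<And>s a s'. 0 \<le> P s a s'" and pol: "\<And>s a. 0 \<le> pol s a"
    and pos: "0 < alive P Sbot s0 pol t s" "0 < pol s a" "0 < P s a s'" and "s' \<notin> Sbot"
  shows "0 < alive P Sbot s0 pol (Suc t) s'"
proof -
  let ?step = "\<lambda>x. \<Sum>b\<in>UNIV. pol x b * P x b s'"
  have "0 < alive P Sbot s0 pol t s * (pol s a * P s a s')"
    using pos by simp
  also have "\<dots> \<le> alive P Sbot s0 pol t s * ?step s"
    by (intro mult_left_mono member_le_sum[where f = "\<lambda>b. pol s b * P s b s'"])
       (simp_all add: less_imp_le[OF pos(1)] Pnn pol)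
  also have "\<dots> \<le> (\<Sum>x\<in>UNIV. alive P Sbot s0 pol t x * ?step x)"
    by (rule member_le_sum[where f = "\<lambda>x. alive P Sbot s0 pol t x * ?step x"])
       (simp_all add: alive_nonneg Pnn pol sum_nonneg)
  finally show ?thesis using \<open>s' \<notin> Sbot\<close> by simp
qed

text \<open>Time \<open>0\<close> is spent in the terminal state \<open>s0\<close>, and all terminal states share the successor
  distribution \<open>\<rho>\<close>.\<close>
lemma alive_one_pos:
  assumes elp: "finite_ELP P \<rho> Sbot s0" and pol: "is_policy pol"
    and "s \<in> Sbot" "0 < P s a s'" "s' \<notin> Sbot"
  shows "0 < alive P Sbot s0 pol (Suc 0) s'"
proof -
  have s0: "s0 \<in> Sbot" and restart: "\<And>s a s'. s \<in> Sbot \<Longrightarrow> P s a s' = \<rho> s'"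
    using elp unfolding finite_ELP_def by blast+
  have "alive P Sbot s0 pol (Suc 0) s' = (\<Sum>b\<in>UNIV. pol s0 b * P s0 b s')"
    using \<open>s' \<notin> Sbot\<close> by (simp add: sum_delta_mult)
  also have "\<dots> = (\<Sum>b\<in>UNIV. pol s0 b) * P s a s'"
    using restart[OF s0] restart[OF \<open>s \<in> Sbot\<close>] by (simp add: sum_distrib_right)
  finally show ?thesis using pol assms(4) by (simp add: is_policy_def)
qed

lemma alive_reached_after_policy_change:
  fixes P :: "'s::finite \<Rightarrow> 'a::finite \<Rightarrow> 's \<Rightarrow> real"
  assumes elp: "finite_ELP P \<rho> Sbot s0" and pol1: "is_policy pol1" and pol2: "is_policy pol2"
    and agree: "\<And>s. s \<notin> K \<Longrightarrow> pol2 s = pol1 s"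
    and "0 < state_dist P s0 pol1 t s"
  shows "s \<in> Sbot \<or> (\<exists>t' k. k \<in> insert s K \<and> 0 < alive P Sbot s0 pol2 t' k)"
  using \<open>0 < state_dist P s0 pol1 t s\<close>
proof (induction t arbitrary: s)
  case 0
  moreover have "s0 \<in> Sbot" using elp unfolding finite_ELP_def by blast
  ultimately show ?case by (simp split: if_splits)
next
  case (Suc t s')
  have Pnn: "\<And>s a s'. 0 \<le> P s a s'" using elp unfolding finite_ELP_def by blast
  have pol1nn: "\<And>s a. 0 \<le> pol1 s a" and pol2nn: "\<And>s a. 0 \<le> pol2 s a"
    using pol1 pol2 by (simp_all add: is_policy_def)
  obtain s a where sd: "0 < state_dist P s0 pol1 t s" and "0 < pol1 s a" "0 < P s a s'"
    using state_dist_Suc_pos[of P pol1, OF Pnn pol1nn Suc.prems] .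
  consider "s' \<in> Sbot" | "\<exists>t' k. k \<in> K \<and> 0 < alive P Sbot s0 pol2 t' k"
    | "s \<in> Sbot" "s' \<notin> Sbot" | t' where "s \<notin> K" "0 < alive P Sbot s0 pol2 t' s" "s' \<notin> Sbot"
    using Suc.IH[OF sd] by blast
  then show ?case
  proof cases
    case 3
    then show ?thesis
      using alive_one_pos[OF elp pol2 _ \<open>0 < P s a s'\<close>] by blast
  next
    case 4
    have "0 < pol2 s a" using agree[OF 4(1)] \<open>0 < pol1 s a\<close> by simp
    with 4 have "0 < alive P Sbot s0 pol2 (Suc t') s'"
      using alive_Suc_pos[of P pol2 Sbot s0 t' s a s'] Pnn pol2nn \<open>0 < P s a s'\<close> by blast
    then show ?thesis by blast
  qed auto
qed

lemma alive_mass_mono: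
  fixes P :: "'s::finite \<Rightarrow> 'a::finite \<Rightarrow> 's \<Rightarrow> real"
  assumes Pnn: "\<And>s a s'. 0 \<le> P s a s'" and pol: "\<And>s a. 0 \<le> pol s a"
    and "K \<inter> Sbot = {}"
    and closed: "\<And>k. k \<in> K \<Longrightarrow> (\<Sum>s'\<in>K. \<Sum>a\<in>UNIV. pol k a * P k a s') = 1"
  shows "(\<Sum>k\<in>K. alive P Sbot s0 pol t k) \<le> (\<Sum>k\<in>K. alive P Sbot s0 pol (Suc t) k)"
proof -
  let ?al = "alive P Sbot s0 pol t" and ?step = "\<lambda>k s'. \<Sum>a\<in>UNIV. pol k a * P k a s'"
  have "(\<Sum>k\<in>K. ?al k) = (\<Sum>k\<in>K. ?al k * (\<Sum>s'\<in>K. ?step k s'))"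
    using closed by simp
  also have "\<dots> = (\<Sum>s'\<in>K. \<Sum>k\<in>K. ?al k * ?step k s')"
    unfolding sum_distrib_left by (rule sum.swap)
  also have "\<dots> \<le> (\<Sum>s'\<in>K. \<Sum>k\<in>UNIV. ?al k * ?step k s')"
    by (intro sum_mono sum_mono2) (simp_all add: alive_nonneg Pnn pol sum_nonneg)
  also have "\<dots> = (\<Sum>s'\<in>K. alive P Sbot s0 pol (Suc t) s')"
    using \<open>K \<inter> Sbot = {}\<close> by (intro sum.cong) auto
  finally show ?thesis .
qed

text \<open>Since \<open>\<Sum>\<^sub>t Pr(T > t)\<close> converges, this mass tends to zero, so it is zero throughout.\<close>
lemma alive_closed_set_zero:
  fixes P :: "'s::finite \<Rightarrow> 'a::finite \<Rightarrow> 's \<Rightarrow> real"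
  assumes elp: "finite_ELP P \<rho> Sbot s0" and pol: "is_policy pol"
    and "K \<inter> Sbot = {}"
    and closed: "\<And>k. k \<in> K \<Longrightarrow> (\<Sum>s'\<in>K. \<Sum>a\<in>UNIV. pol k a * P k a s') = 1"
    and "k \<in> K"
  shows "alive P Sbot s0 pol t k = 0"
proof -
  have Pnn: "\<And>s a s'. 0 \<le> P s a s'" and polnn: "\<And>s a. 0 \<le> pol s a"
    using elp pol unfolding finite_ELP_def is_policy_def by blast+
  let ?mass = "\<lambda>t. \<Sum>k\<in>K. alive P Sbot s0 pol t k"
  let ?total = "\<lambda>t. \<Sum>s\<in>UNIV. alive P Sbot s0 pol t s"
  have "incseq ?mass"
    by (rule incseq_SucI) (rule alive_mass_mono[of P pol, OF Pnn polnn \<open>K \<inter> Sbot = {}\<close> closed])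
  moreover have "?mass t' \<le> ?total t'" for t'
    by (rule sum_mono2) (simp_all add: alive_nonneg Pnn polnn)
  ultimately have "\<exists>N. \<forall>t'\<ge>N. ?mass t \<le> ?total t'"
    by (meson incseqD order_trans)
  moreover have "finite_expected_T P Sbot s0 pol"
    using elp pol unfolding finite_ELP_def by blast
  then have "summable ?total"
    by (simp add: finite_expected_T_def)
  then have "?total \<longlonglongrightarrow> 0"
    by (rule summable_LIMSEQ_zero)
  ultimately have "?mass t \<le> 0"
    by (intro LIMSEQ_le_const[of ?total 0 "?mass t"])
  moreover have nonneg: "\<And>k. 0 \<le> alive P Sbot s0 pol t k"
    by (simp add: alive_nonneg Pnn polnn)
  ultimately have "?mass t = 0"
    by (simp add: antisym sum_nonneg)
  then show ?thesis
    using \<open>k \<in> K\<close> sum_nonneg_eq_0_iff[of K "alive P Sbot s0 pol t"] nonneg by simp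
qed

text \<open>A policy that reaches the trap with positive probability and then keeps choosing actions
  inside it never terminates with positive probability.\<close>
lemma finite_ELP_no_trap:
  fixes P :: "'s::finite \<Rightarrow> 'a::finite \<Rightarrow> 's \<Rightarrow> real"
  assumes elp: "finite_ELP P \<rho> Sbot s0"
  shows "\<not> trap P Sbot E"
proof
  assume "trap P Sbot E"
  then have "E \<noteq> {}"
    and closed: "\<And>s a s'. (s, a) \<in> E \<Longrightarrow> 0 < P s a s' \<Longrightarrow> s' \<notin> Sbot \<and> (\<exists>a'. (s', a') \<in> E)"
    unfolding trap_def by auto
  have Pnn: "\<And>s a s'. 0 \<le> P s a s'" and stochastic: "\<And>s a. (\<Sum>s'\<in>UNIV. P s a s') = 1"
    and reachable: "\<And>s. \<exists>pol. is_policy pol \<and> (\<exists>t. 0 < state_dist P s0 pol t s)"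
    using elp unfolding finite_ELP_def by blast+
  define K where "K = fst ` E - Sbot"
  define \<sigma> where "\<sigma> s = (SOME a. (s, a) \<in> E)" for s
  have successor_in_K: "s' \<in> K" if "(s, a) \<in> E" "0 < P s a s'" for s a s'
    using closed[OF that] unfolding K_def by force
  have \<sigma>_in_E: "(k, \<sigma> k) \<in> E" if "k \<in> K" for k
    using that unfolding K_def \<sigma>_def by (auto intro: someI)
  have "K \<inter> Sbot = {}" by (auto simp: K_def)
  obtain s a where "(s, a) \<in> E" using \<open>E \<noteq> {}\<close> by auto
  moreover obtain k where "0 < P s a k"
    using sum_pos_imp_ex_pos[of "P s a" UNIV] stochastic by auto
  ultimately have "k \<in> K" by (rule successor_in_K)
  obtain pol1 t where pol1: "is_policy pol1" and "0 < state_dist P s0 pol1 t k"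
    using reachable by blast
  define pol2 where "pol2 s a = (if s \<in> K then if a = \<sigma> s then 1 else 0 else pol1 s a)" for s a
  have pol2: "is_policy pol2"
    unfolding is_policy_def
  proof (intro conjI allI)
    show "0 \<le> pol2 s a" for s a
      using pol1 by (simp add: pol2_def is_policy_def)
    show "(\<Sum>a\<in>UNIV. pol2 s a) = 1" for s
      using pol1 by (cases "s \<in> K") (simp_all add: pol2_def is_policy_def)
  qed
  have stays_in_K: "(\<Sum>s'\<in>K. \<Sum>a\<in>UNIV. pol2 k a * P k a s') = 1" if "k \<in> K" for k
  proof -
    have "(\<Sum>s'\<in>K. \<Sum>a\<in>UNIV. pol2 k a * P k a s') = (\<Sum>s'\<in>K. P k (\<sigma> k) s')"
      using that by (simp add: pol2_def sum_delta_mult)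
    also have "\<dots> = (\<Sum>s'\<in>UNIV. P k (\<sigma> k) s')"
      using successor_in_K[OF \<sigma>_in_E[OF that]] Pnn
      by (intro sum.mono_neutral_left) (auto simp: order_less_le)
    finally show ?thesis using stochastic by simp
  qed
  have agree: "\<And>s. s \<notin> K \<Longrightarrow> pol2 s = pol1 s"
    by (auto simp: pol2_def)
  obtain t' k' where "k' \<in> K" "0 < alive P Sbot s0 pol2 t' k'"
    using alive_reached_after_policy_change[where K = K, OF elp pol1 pol2 agree \<open>0 < state_dist P s0 pol1 t k\<close>]
      \<open>k \<in> K\<close> \<open>K \<inter> Sbot = {}\<close> by (auto simp: insert_absorb)
  then show False
    using alive_closed_set_zero[OF elp pol2 \<open>K \<inter> Sbot = {}\<close> stays_in_K] by force
qed

section \<open>The Bellman operator of a proper kernel\<close>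

lemma bellman_split_reward:
  "bellman P R Sbot Q s a = (\<Sum>s'\<in>UNIV. P s a s' * R s') + bellman P (\<lambda>_. 0) Sbot Q s a"
  unfolding bellman_def by (simp add: sum.distrib distrib_left)

locale proper_kernel =
  fixes P :: "'s::finite \<Rightarrow> 'a::finite \<Rightarrow> 's \<Rightarrow> real" and Sbot :: "'s set"
  assumes nonneg: "0 \<le> P s a s'"
    and stochastic: "(\<Sum>s'\<in>UNIV. P s a s') = 1"
    and no_trap: "\<not> trap P Sbot E"

lemma finite_ELP_proper_kernel:
  assumes "finite_ELP P \<rho> Sbot s0"
  shows "proper_kernel P Sbot"
proof
  show "0 \<le> P s a s'" and "(\<Sum>s'\<in>UNIV. P s a s') = 1" for s a s'
    using assms unfolding finite_ELP_def by blast+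
  show "\<not> trap P Sbot E" for E
    using finite_ELP_no_trap[OF assms] .
qed

context proper_kernel
begin

abbreviation B0 :: "('s \<Rightarrow> 'a \<Rightarrow> real) \<Rightarrow> 's \<Rightarrow> 'a \<Rightarrow> real" where
  "B0 \<equiv> bellman P (\<lambda>_. 0) Sbot"

lemma B0_mono: "(\<And>s a. h s a \<le> h' s a) \<Longrightarrow> B0 h s a \<le> B0 h' s a"
  unfolding bellman_def
  by (intro sum_mono mult_left_mono) (auto simp: nonneg intro: order_trans[OF _ Max_range_ge])

lemma B0_funpow_mono: "(\<And>s a. h s a \<le> h' s a) \<Longrightarrow> (B0 ^^ n) h s a \<le> (B0 ^^ n) h' s a"
  by (induction n arbitrary: s a) (auto intro: B0_mono)

lemma B0_diff_le: "B0 h s a - B0 h' s a \<le> B0 (\<lambda>s a. h s a - h' s a) s a"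
  unfolding bellman_def sum_subtractf[symmetric]
proof (rule sum_mono)
  fix s'
  have "(if s' \<notin> Sbot then Max (range (h s')) else 0) - (if s' \<notin> Sbot then Max (range (h' s')) else 0)
      \<le> (if s' \<notin> Sbot then Max (range (\<lambda>a. h s' a - h' s' a)) else 0)"
    by (simp add: Max_range_diff_le)
  then show "P s a s' * (0 + (if s' \<notin> Sbot then Max (range (h s')) else 0))
      - P s a s' * (0 + (if s' \<notin> Sbot then Max (range (h' s')) else 0))
      \<le> P s a s' * (0 + (if s' \<notin> Sbot then Max (range (\<lambda>a. h s' a - h' s' a)) else 0))"
    by (simp add: nonneg mult_left_mono flip: right_diff_distrib)
qed

lemma B0_le_const:
  assumes "\<And>s a. h s a \<le> c" and "0 \<le> c"
  shows "B0 h s a \<le> c"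
proof -
  have "B0 h s a \<le> (\<Sum>s'\<in>UNIV. P s a s' * c)"
    unfolding bellman_def using assms by (intro sum_mono mult_left_mono) (auto simp: nonneg)
  also have "\<dots> = (\<Sum>s'\<in>UNIV. P s a s') * c"
    by (rule sum_distrib_right[symmetric])
  finally show ?thesis
    by (simp add: stochastic)
qed

lemma B0_nonneg: "(\<And>s a. 0 \<le> h s a) \<Longrightarrow> 0 \<le> B0 h s a"
  unfolding bellman_def
  by (intro sum_nonneg mult_nonneg_nonneg) (auto simp: nonneg intro: order_trans[OF _ Max_range_ge])

lemma B0_cmult: "0 \<le> c \<Longrightarrow> B0 (\<lambda>s a. c * h s a) s a = c * B0 h s a"
  unfolding bellman_def
  by (simp add: Max_range_cmult sum_distrib_left algebra_simps if_distrib cong: if_cong)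

lemma B0_eq_bound_successor:
  assumes le: "\<And>s a. h s a \<le> c" and "0 < c" and eq: "B0 h s a = c" and "0 < P s a s'"
  shows "s' \<notin> Sbot \<and> Max (range (h s')) = c"
proof -
  define v where "v x = (if x \<notin> Sbot then Max (range (h x)) else 0)" for x
  have v_le: "v x \<le> c" for x
    using le \<open>0 < c\<close> by (simp add: v_def)
  have "(\<Sum>x\<in>UNIV. P s a x * (c - v x)) = (\<Sum>x\<in>UNIV. P s a x * c) - B0 h s a"
    unfolding bellman_def v_def by (simp add: right_diff_distrib sum_subtractf)
  also have "\<dots> = (\<Sum>x\<in>UNIV. P s a x) * c - c"
    using eq by (simp add: sum_distrib_right)
  also have "\<dots> = 0"
    by (simp add: stochastic)
  finally have "P s a s' * (c - v s') = 0"
    using sum_nonneg_eq_0_iff[of UNIV "\<lambda>x. P s a x * (c - v x)"] v_le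
    by (simp add: nonneg)
  then have "v s' = c"
    using \<open>0 < P s a s'\<close> by simp
  then show ?thesis
    using \<open>0 < c\<close> by (auto simp: v_def split: if_splits)
qed

text \<open>Properness: otherwise the pairs where \<open>h\<close> is maximal form a trap.\<close>
lemma B0_subinvariant_nonpos:
  assumes sub: "\<And>s a. h s a \<le> B0 h s a"
  shows "h s a \<le> 0"
proof (rule ccontr)
  assume "\<not> h s a \<le> 0"
  define c where "c = Max (range (\<lambda>p. h (fst p) (snd p)))"
  define E where "E = {(s, a). h s a = c}"
  have le_c: "h s a \<le> c" for s a
    using Max_range_ge[of "\<lambda>p. h (fst p) (snd p)" "(s, a)"] by (simp add: c_def)
  have "0 < c"
    using le_c[of s a] \<open>\<not> h s a \<le> 0\<close> by linarith
  obtain p where "c = h (fst p) (snd p)"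
    unfolding c_def by (rule Max_range_attained)
  then have "E \<noteq> {}"
    by (auto simp: E_def)
  moreover have "s' \<notin> Sbot \<and> (\<exists>a'. (s', a') \<in> E)" if "(s, a) \<in> E" "0 < P s a s'" for s a s'
  proof -
    have "B0 h s a \<le> c"
      by (rule B0_le_const[where h = h, OF le_c]) (use \<open>0 < c\<close> in simp)
    then have "B0 h s a = c"
      using sub[of s a] that(1) by (simp add: E_def)
    then have "s' \<notin> Sbot" and "Max (range (h s')) = c"
      using B0_eq_bound_successor[where h = h, OF le_c \<open>0 < c\<close> _ that(2)] by blast+
    moreover obtain a' where "Max (range (h s')) = h s' a'"
      by (rule Max_range_attained)
    ultimately show ?thesis by (auto simp: E_def)
  qed
  ultimately have "trap P Sbot E"
    unfolding trap_def by blast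
  with no_trap show False by blast
qed

lemma bellman_sub_le_super:
  assumes sub: "\<And>s a. Q s a \<le> bellman P R Sbot Q s a"
    and super: "\<And>s a. bellman P R Sbot V s a \<le> V s a"
  shows "Q s a \<le> V s a"
proof -
  have "Q s a - V s a \<le> B0 (\<lambda>s a. Q s a - V s a) s a" for s a
  proof -
    have "Q s a - V s a \<le> bellman P R Sbot Q s a - bellman P R Sbot V s a"
      using sub[of s a] super[of s a] by linarith
    also have "\<dots> = B0 Q s a - B0 V s a"
      by (simp add: bellman_split_reward[of P R])
    also have "\<dots> \<le> B0 (\<lambda>s a. Q s a - V s a) s a"
      by (rule B0_diff_le)
    finally show ?thesis .
  qed
  then show ?thesis
    using B0_subinvariant_nonpos[of "\<lambda>s a. Q s a - V s a" s a] by simp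
qed

lemma bellman_fixpoint_unique:
  assumes "bellman P R Sbot V = V" and "bellman P R Sbot W = W"
  shows "V = W"
proof (intro ext antisym)
  show "V s a \<le> W s a" and "W s a \<le> V s a" for s a
    by (rule bellman_sub_le_super[where R = R]; simp add: assms)+
qed

lemma bellman_abs_diff_le:
  "\<bar>bellman P R Sbot Q s a - bellman P R Sbot Q' s a\<bar> \<le> B0 (\<lambda>s a. \<bar>Q s a - Q' s a\<bar>) s a"
proof -
  have "B0 (\<lambda>s a. Q s a - Q' s a) s a \<le> B0 (\<lambda>s a. \<bar>Q s a - Q' s a\<bar>) s a"
    and "B0 (\<lambda>s a. Q' s a - Q s a) s a \<le> B0 (\<lambda>s a. \<bar>Q s a - Q' s a\<bar>) s a"
    by (rule B0_mono; simp)+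
  then show ?thesis
    using B0_diff_le[where h = Q and h' = Q' and s = s and a = a]
      B0_diff_le[where h = Q' and h' = Q and s = s and a = a]
    by (simp add: bellman_split_reward[of P R] abs_le_iff)
qed

lemma bellman_funpow_abs_diff_le:
  "\<bar>(bellman P R Sbot ^^ n) Q s a - (bellman P R Sbot ^^ n) Q' s a\<bar>
     \<le> (B0 ^^ n) (\<lambda>s a. \<bar>Q s a - Q' s a\<bar>) s a"
proof (induction n arbitrary: s a)
  case (Suc n)
  have "\<bar>(bellman P R Sbot ^^ Suc n) Q s a - (bellman P R Sbot ^^ Suc n) Q' s a\<bar>
      \<le> B0 (\<lambda>s a. \<bar>(bellman P R Sbot ^^ n) Q s a - (bellman P R Sbot ^^ n) Q' s a\<bar>) s a"
    by (simp add: bellman_abs_diff_le)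
  also have "\<dots> \<le> (B0 ^^ Suc n) (\<lambda>s a. \<bar>Q s a - Q' s a\<bar>) s a"
    using Suc.IH by (simp add: B0_mono)
  finally show ?case .
qed simp

text \<open>\<open>survival n s a\<close> is the largest probability, over all policies, of not having terminated
  within \<open>n\<close> steps after taking action \<open>a\<close> in state \<open>s\<close>.\<close>
definition survival :: "nat \<Rightarrow> 's \<Rightarrow> 'a \<Rightarrow> real" where
  "survival n = (B0 ^^ n) (\<lambda>_ _. 1)"

lemma survival_Suc: "survival (Suc n) = B0 (survival n)"
  by (simp add: survival_def)

lemma survival_bounds: "0 \<le> survival n s a \<and> survival n s a \<le> 1"
  by (induction n arbitrary: s a) (simp_all add: survival_def B0_nonneg B0_le_const)

lemma survival_Suc_le: "survival (Suc n) s a \<le> survival n s a"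
proof (induction n arbitrary: s a)
  case 0
  show ?case using survival_bounds[of "Suc 0"] by (simp add: survival_def)
next
  case (Suc n)
  have "B0 (survival (Suc n)) s a \<le> B0 (survival n) s a"
    by (rule B0_mono) (rule Suc.IH)
  then show ?case by (simp add: survival_Suc)
qed

lemma survival_one_successor:
  assumes "survival (Suc n) s a = 1" and "0 < P s a s'"
  shows "s' \<notin> Sbot \<and> (\<exists>a'. survival n s' a' = 1)"
proof -
  have le_1: "\<And>s a. survival n s a \<le> 1"
    using survival_bounds by blast
  have "B0 (survival n) s a = 1"
    using assms(1) by (simp add: survival_Suc)
  then have "s' \<notin> Sbot" and "Max (range (survival n s')) = 1"
    using B0_eq_bound_successor[where h = "survival n" and c = 1, OF le_1 _ _ assms(2)] by simp_all
  moreover obtain a' where "Max (range (survival n s')) = survival n s' a'"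
    by (rule Max_range_attained)
  ultimately show ?thesis by auto
qed

text \<open>The pairs from which termination within \<open>n\<close> steps can be avoided with certainty form a
  decreasing chain; it cannot stabilise at a nonempty set, which would be a trap.\<close>
lemma survival_eventually_lt_1: "\<exists>n. \<forall>s a. survival n s a < 1"
proof -
  define L where "L n = {(s, a). survival n s a = 1}" for n
  have L_Suc_subset: "L (Suc n) \<subseteq> L n" for n
  proof -
    have "survival n s a = 1" if "survival (Suc n) s a = 1" for s a
      using survival_Suc_le[of n s a] survival_bounds[of n s a] that by linarith
    then show ?thesis by (auto simp: L_def)
  qed
  have L_Suc_proper: "L (Suc n) \<noteq> L n" if "L (Suc n) \<noteq> {}" for n
  proof
    assume eq: "L (Suc n) = L n"
    have "s' \<notin> Sbot \<and> (\<exists>a'. (s', a') \<in> L (Suc n))"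
      if in_L: "(s, a) \<in> L (Suc n)" and pos: "0 < P s a s'" for s a s'
    proof -
      have "survival (Suc n) s a = 1"
        using in_L by (simp add: L_def)
      then have "s' \<notin> Sbot \<and> (\<exists>a'. survival n s' a' = 1)"
        using pos by (rule survival_one_successor)
      then obtain a' where "s' \<notin> Sbot" and "(s', a') \<in> L n"
        by (auto simp: L_def)
      then show ?thesis
        using eq by blast
    qed
    then have "trap P Sbot (L (Suc n))"
      unfolding trap_def using that by blast
    with no_trap show False by blast
  qed
  have card_bound: "n + card (L n) \<le> card (UNIV :: ('s \<times> 'a) set)" if "L n \<noteq> {}" for n
    using that
  proof (induction n)
    case 0
    show ?case using card_mono[of UNIV "L 0"] by simp
  next
    case (Suc n)
    then have "L n \<noteq> {}" and "L (Suc n) \<subset> L n"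
      using L_Suc_subset L_Suc_proper by blast+
    then show ?case
      using Suc.IH psubset_card_mono[of "L n" "L (Suc n)"] by simp
  qed
  let ?N = "card (UNIV :: ('s \<times> 'a) set)"
  have "L ?N = {}"
  proof (rule ccontr)
    assume "L ?N \<noteq> {}"
    then have "0 < card (L ?N)"
      by (simp add: card_gt_0_iff)
    with card_bound[OF \<open>L ?N \<noteq> {}\<close>] show False
      by simp
  qed
  then have "survival ?N s a \<noteq> 1" for s a
    unfolding L_def by blast
  then have "survival ?N s a < 1" for s a
    using survival_bounds[of ?N s a] by (simp add: less_le)
  then show ?thesis by blast
qed

lemma B0_funpow_const:
  assumes "0 \<le> c"
  shows "(B0 ^^ n) (\<lambda>_ _. c) = (\<lambda>s a. c * survival n s a)"
proof (induction n)
  case 0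
  show ?case by (simp add: survival_def)
next
  case (Suc n)
  have "(B0 ^^ Suc n) (\<lambda>_ _. c) = B0 (\<lambda>s a. c * survival n s a)"
    using Suc.IH by simp
  also have "\<dots> = (\<lambda>s a. c * survival (Suc n) s a)"
    by (simp add: fun_eq_iff B0_cmult assms survival_Suc)
  finally show ?case .
qed

lemma bellman_power_contraction:
  "\<exists>k N. k < 1 \<and> (\<forall>Q Q' c s a. (\<forall>s a. \<bar>Q s a - Q' s a\<bar> \<le> c) \<longrightarrow>
      \<bar>(bellman P R Sbot ^^ N) Q s a - (bellman P R Sbot ^^ N) Q' s a\<bar> \<le> k * c)"
proof -
  obtain N where lt_1: "\<And>s a. survival N s a < 1"
    using survival_eventually_lt_1 by blast
  define k where "k = Max (range (\<lambda>p. survival N (fst p) (snd p)))"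
  obtain p where "k = survival N (fst p) (snd p)"
    unfolding k_def by (rule Max_range_attained)
  then have "k < 1"
    by (simp add: lt_1)
  moreover have "\<bar>(bellman P R Sbot ^^ N) Q s a - (bellman P R Sbot ^^ N) Q' s a\<bar> \<le> k * c"
    if le_c: "\<forall>s a. \<bar>Q s a - Q' s a\<bar> \<le> c" for Q Q' c s a
  proof -
    have "0 \<le> c"
      using le_c abs_ge_zero order_trans by blast
    have "\<bar>(bellman P R Sbot ^^ N) Q s a - (bellman P R Sbot ^^ N) Q' s a\<bar>
        \<le> (B0 ^^ N) (\<lambda>s a. \<bar>Q s a - Q' s a\<bar>) s a"
      by (rule bellman_funpow_abs_diff_le)
    also have "\<dots> \<le> (B0 ^^ N) (\<lambda>_ _. c) s a"
      using le_c by (intro B0_funpow_mono) blast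
    also have "\<dots> = c * survival N s a"
      by (simp add: B0_funpow_const \<open>0 \<le> c\<close>)
    also have "\<dots> \<le> k * c"
      using Max_range_ge[of "\<lambda>p. survival N (fst p) (snd p)" "(s, a)"] \<open>0 \<le> c\<close>
      by (simp add: k_def mult.commute mult_left_mono)
    finally show ?thesis .
  qed
  ultimately show ?thesis by blast
qed

lemma bellman_has_fixpoint: "\<exists>V. bellman P R Sbot V = V"
proof -
  obtain k N where "k < 1" and contraction:
    "\<forall>Q Q' c s a. (\<forall>s a. \<bar>Q s a - Q' s a\<bar> \<le> c) \<longrightarrow>
       \<bar>(bellman P R Sbot ^^ N) Q s a - (bellman P R Sbot ^^ N) Q' s a\<bar> \<le> k * c"
    using bellman_power_contraction[where R = R] by blast
  define F where "F g = case_prod (bellman P R Sbot (curry g))" for g :: "'s \<times> 'a \<Rightarrow> real"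
  have F_funpow: "(F ^^ n) g = case_prod ((bellman P R Sbot ^^ n) (curry g))" for n g
    by (induction n) (simp_all add: F_def)
  have F_contraction: "dist ((F ^^ N) f p) ((F ^^ N) g p) \<le> k * c"
    if "\<And>q. dist (f q) (g q) \<le> c" for f g c p
  proof -
    have "\<forall>s a. \<bar>curry f s a - curry g s a\<bar> \<le> c"
      using that by (simp add: dist_real_def)
    then have "\<bar>(bellman P R Sbot ^^ N) (curry f) (fst p) (snd p)
        - (bellman P R Sbot ^^ N) (curry g) (fst p) (snd p)\<bar> \<le> k * c"
      using contraction by blast
    then show ?thesis
      by (simp add: F_funpow dist_real_def case_prod_beta)
  qed
  obtain g where "F g = g"
    using contracting_power_has_fixpoint[where F = F and N = N and k = k, OF \<open>k < 1\<close> F_contraction] .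
  then have "bellman P R Sbot (curry g) = curry g"
    unfolding F_def by (metis curry_case_prod)
  then show ?thesis by blast
qed

lemma Qstar_fixpoint: "bellman P R Sbot (Qstar P R Sbot) = Qstar P R Sbot"
proof -
  obtain V where V: "bellman P R Sbot V = V"
    using bellman_has_fixpoint by blast
  have "\<exists>!V. bellman P R Sbot V = V"
  proof (rule ex1I)
    show "bellman P R Sbot V = V" by (rule V)
    show "W = V" if "bellman P R Sbot W = W" for W
      using that V by (rule bellman_fixpoint_unique)
  qed
  then show ?thesis
    unfolding Qstar_def by (rule theI')
qed

lemma subsolution_le_Qstar: "(\<And>s a. Q s a \<le> bellman P R Sbot Q s a) \<Longrightarrow> Q s a \<le> Qstar P R Sbot s a"
  by (rule bellman_sub_le_super[where R = R]) (simp_all add: Qstar_fixpoint)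

lemma bellman_ge_imp_Max_eq:
  assumes le: "\<And>s a. Q s a \<le> V s a"
    and ge: "bellman P R Sbot V s a \<le> bellman P R Sbot Q s a"
    and "0 < P s a s'" and "s' \<notin> Sbot"
  shows "Max (range (Q s')) = Max (range (V s'))"
proof -
  define gap where "gap x = P s a x * (if x \<notin> Sbot then Max (range (V x)) - Max (range (Q x)) else 0)"
    for x
  have gap_nonneg: "0 \<le> gap x" for x
  proof -
    have "Max (range (Q x)) \<le> Max (range (V x))"
      by (rule Max_range_mono) (rule le)
    then show ?thesis by (simp add: gap_def nonneg)
  qed
  have "sum gap UNIV = bellman P R Sbot V s a - bellman P R Sbot Q s a"
    unfolding gap_def bellman_def sum_subtractf[symmetric]
    by (rule sum.cong) (simp_all add: right_diff_distrib distrib_left)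
  moreover have "0 \<le> sum gap UNIV"
    by (rule sum_nonneg) (rule gap_nonneg)
  ultimately have "sum gap UNIV = 0"
    using ge by linarith
  then have "gap s' = 0"
    using sum_nonneg_eq_0_iff[of UNIV gap] gap_nonneg by simp
  then show ?thesis
    using \<open>0 < P s a s'\<close> \<open>s' \<notin> Sbot\<close> by (simp add: gap_def)
qed

end

theorem mainTheorem11:
  fixes P :: "'s::finite \<Rightarrow> 'a::finite \<Rightarrow> 's \<Rightarrow> real"
    and R :: "'s \<Rightarrow> real" and \<rho> :: "'s \<Rightarrow> real" and Sbot :: "'s set" and s0 :: 's
    and pol mu Qmax :: "'s \<Rightarrow> 'a \<Rightarrow> real" and s :: 's and a :: 'a
  assumes elp: "finite_ELP P \<rho> Sbot s0"
    and pol: "is_policy pol"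
    and feas: "\<forall>s a. Qmax s a \<le> bellman P R Sbot Qmax s a"
    and opt: "\<forall>Q. (\<forall>s a. Q s a \<le> bellman P R Sbot Q s a) \<longrightarrow>
                   exp_terminal_Q P Sbot s0 pol Q \<le> exp_terminal_Q P Sbot s0 pol Qmax"
    and mu: "is_policy mu" and greedy: "greedy Qmax mu"
    and eq: "Qmax s a = Qstar P R Sbot s a"
  shows "\<forall>s' a'. s' \<notin> Sbot \<and> P s a s' * mu s' a' > 0 \<longrightarrow>
           Qmax s' a' = Qstar P R Sbot s' a' \<and>
           Max (range (Qmax s')) = Max (range (Qstar P R Sbot s'))"
proof (intro allI impI)
  interpret proper_kernel P Sbot
    by (rule finite_ELP_proper_kernel[OF elp])
  let ?Q = "Qstar P R Sbot"
  have below: "Qmax x b \<le> ?Q x b" for x b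
    using feas by (intro subsolution_le_Qstar) blast
  have "bellman P R Sbot ?Q s a = Qmax s a"
    using eq by (simp add: Qstar_fixpoint)
  also have "\<dots> \<le> bellman P R Sbot Qmax s a"
    using feas by blast
  finally have bellman_le: "bellman P R Sbot ?Q s a \<le> bellman P R Sbot Qmax s a" .
  fix s' a'
  assume "s' \<notin> Sbot \<and> P s a s' * mu s' a' > 0"
  moreover have "0 \<le> P s a s'" and "0 \<le> mu s' a'"
    using nonneg mu by (auto simp: is_policy_def)
  ultimately have "s' \<notin> Sbot" and "0 < P s a s'" and "0 < mu s' a'"
    by (auto simp: zero_less_mult_iff)
  then have Max_eq: "Max (range (Qmax s')) = Max (range (?Q s'))"
    using bellman_ge_imp_Max_eq[where Q = Qmax and V = ?Q, OF below bellman_le] by blast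
  have "Qmax s' a' = Max (range (Qmax s'))"
    using greedy \<open>0 < mu s' a'\<close> unfolding greedy_def by blast
  moreover have "?Q s' a' \<le> Max (range (?Q s'))"
    by (rule Max_range_ge)
  ultimately show "Qmax s' a' = ?Q s' a' \<and> Max (range (Qmax s')) = Max (range (?Q s'))"
    using Max_eq below[of s' a'] by linarith
qed

end
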